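(* For all $0\leq i\leq k$, $$f_{k,i}(x)=(1+x)^{\binom{i}{2}}\prod_{\ell=i+1}^{k}\bigl((1+x)^{\ell}-1\bigr).$$
   Context: An inversion sequence of length $n$ is $e=e_1\ldots e_n$ with $0\le e_i<i$. $\mathrm{asc}(e_1\ldots e_i)=|\{\ell\in[i-1]:e_\ell<e_{\ell+1}\}|$. An ascent sequence is an inversion sequence with $e_{i+1}\le \mathrm{asc}(e_1\ldots e_i)+1$ for all $i$; it is primitive if $e_i\ne e_{i+1}$ for all $i$. Let $\mathcal{PA}$ be the set of primitive ascent sequences of all lengths $\geq1$. For primitive $e$, partition $e$ into maximal strictly decreasing consecutive blocks (runs); an entry is a tail if it is the last (smallest) entry of its run. Define $\mathrm{wt}(e)=\prod_{i=1}^{\mathrm{len}(e)}\mathrm{wt}(e_i)$ with $\mathrm{wt}(e_i)=1$ if $e_i$ is a tail and $\mathrm{wt}(e_i)=x$ otherwise. A sequence avoids $\underline{12}0$ if there are no indices $2\le i<j$ with $e_j<e_{i-1}<e_i$. Let $\mathcal{PA}_{k,i}(\underline{12}0)$ be the set of $\underline{12}0$-avoiding $e\in\mathcal{PA}$ with $\mathrm{asc}(e)=k$ and last entry equal to $i$, and $f_{k,i}(x)=\sum_{e\in\mathcal{PA}_{k,i}(\underline{12}0)}\mathrm{wt}(e)$. *)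

theory Defs
  imports Main
begin

(* Sequences are lists of naturals, 0-indexed: e ! j corresponds to e_{j+1}. *)

definition asc :: "nat list \<Rightarrow> nat" where
  "asc e = card {l. l + 1 < length e \<and> e ! l < e ! (l + 1)}"

definition inversion_seq :: "nat list \<Rightarrow> bool" where
  "inversion_seq e \<longleftrightarrow> (\<forall>j < length e. e ! j < j + 1)"

definition ascent_seq :: "nat list \<Rightarrow> bool" where
  "ascent_seq e \<longleftrightarrow> inversion_seq e \<and>
     (\<forall>j. 1 \<le> j \<and> j < length e \<longrightarrow> e ! j \<le> asc (take j e) + 1)"

definition primitive :: "nat list \<Rightarrow> bool" where
  "primitive e \<longleftrightarrow> (\<forall>j. j + 1 < length e \<longrightarrow> e ! j \<noteq> e ! (j + 1))"

(* position j is a tail: last entry of its maximal strictly decreasing run *)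
definition is_tail :: "nat list \<Rightarrow> nat \<Rightarrow> bool" where
  "is_tail e j \<longleftrightarrow> j + 1 = length e \<or> \<not> (e ! (j + 1) < e ! j)"

definition wt :: "'a::comm_ring_1 \<Rightarrow> nat list \<Rightarrow> 'a" where
  "wt x e = (\<Prod>j<length e. if is_tail e j then 1 else x)"

(* avoids 12_0 (underlined 12): no 1-indexed 2 \<le> i < j with e_j < e_{i-1} < e_i;
   here p = i-1 (0-indexed i-2), q = j-1 *)
definition avoids_12_0 :: "nat list \<Rightarrow> bool" where
  "avoids_12_0 e \<longleftrightarrow>
     \<not> (\<exists>p q. p + 1 < q \<and> q < length e \<and> e ! q < e ! p \<and> e ! p < e ! (p + 1))"

definition PA_12_0 :: "nat \<Rightarrow> nat \<Rightarrow> nat list set" where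
  "PA_12_0 k i = {e. e \<noteq> [] \<and> ascent_seq e \<and> primitive e \<and> avoids_12_0 e
                     \<and> asc e = k \<and> last e = i}"

definition f :: "nat \<Rightarrow> nat \<Rightarrow> 'a::comm_ring_1 \<Rightarrow> 'a" where
  "f k i x = (\<Sum>e\<in>PA_12_0 k i. wt x e)"

end

theory Submission
  imports Defs
begin

(* Appending i to a primitive 12_0-avoiding ascent sequence e keeps it in the class iff
   i differs from the last entry, i <= asc e + 1, and i is at least the largest ascent
   bottom of e (the largest e_p with e_p < e_(p+1)); the last condition is 12_0-avoidance.
   Refining f_(k,i) by this largest ascent bottom b yields a recurrence: the last entry i
   follows either a larger last entry j by a descent (weight x; k and b unchanged) or a
   sequence counted by f_(k-1,b) by an ascent. Assuming the formula for k - 1, downward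
   induction on i solves it as f_(k-1,b) ((1+x)^(k-i) - [i = b]) for b < k, and summing
   over b <= i telescopes to the claimed product. *)

definition ascent_bottom_max :: "nat list \<Rightarrow> nat" where
  "ascent_bottom_max e = Max (insert 0 {e ! p | p. p + 1 < length e \<and> e ! p < e ! (p + 1)})"

lemma ascent_bottom_max_le_iff:
  "ascent_bottom_max e \<le> z \<longleftrightarrow> (\<forall>p. p + 1 < length e \<and> e ! p < e ! (p + 1) \<longrightarrow> e ! p \<le> z)"
proof -
  have "finite {e ! p | p. p + 1 < length e \<and> e ! p < e ! (p + 1)}"
    by (rule finite_subset[of _ "set e"]) auto
  then show ?thesis
    unfolding ascent_bottom_max_def by auto
qed

lemma ascent_bottom_max_snoc:
  assumes "e \<noteq> []"
  shows "ascent_bottom_max (e @ [i]) =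
    (if last e < i then max (ascent_bottom_max e) (last e) else ascent_bottom_max e)"
proof -
  obtain m where m: "length e = Suc m" and last: "last e = e ! m"
    using assms by (cases e rule: rev_cases) auto
  let ?asc_at = "\<lambda>e p. p + 1 < length e \<and> e ! p < e ! (p + 1)"
  have "?asc_at (e @ [i]) p \<longleftrightarrow> ?asc_at e p \<or> (p = m \<and> last e < i)" for p
    using m last by (auto simp: nth_append less_Suc_eq)
  then have "ascent_bottom_max (e @ [i]) \<le> z \<longleftrightarrow>
      ascent_bottom_max e \<le> z \<and> (last e < i \<longrightarrow> last e \<le> z)" for z
    unfolding ascent_bottom_max_le_iff using m last by (auto simp: nth_append)
  from this[of "ascent_bottom_max (e @ [i])"] this[of "max (ascent_bottom_max e) (last e)"]
    this[of "ascent_bottom_max e"]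
  show ?thesis
    by (auto intro: order.antisym)
qed

lemma asc_snoc:
  assumes "e \<noteq> []"
  shows "asc (e @ [i]) = asc e + of_bool (last e < i)"
proof -
  obtain m where m: "length e = Suc m" and last: "last e = e ! m"
    using assms by (cases e rule: rev_cases) auto
  have "{l. l + 1 < length (e @ [i]) \<and> (e @ [i]) ! l < (e @ [i]) ! (l + 1)} =
      {l. l + 1 < length e \<and> e ! l < e ! (l + 1)} \<union> (if last e < i then {m} else {})"
    using m last by (auto simp: nth_append less_Suc_eq)
  moreover have "finite {l. l + 1 < length e \<and> e ! l < e ! (l + 1)}"
    by (rule finite_subset[of _ "{..<length e}"]) auto
  ultimately show ?thesis
    unfolding asc_def using m by auto
qed

lemma asc_less_length: "e \<noteq> [] \<Longrightarrow> asc e < length e"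
proof -
  assume "e \<noteq> []"
  then have "{l. l + 1 < length e \<and> e ! l < e ! (l + 1)} \<subseteq> {..<length e - 1}"
    by auto
  then have "asc e \<le> length e - 1"
    unfolding asc_def by (metis card_lessThan card_mono finite_lessThan)
  with \<open>e \<noteq> []\<close> show ?thesis
    by (cases e) auto
qed

lemma wt_snoc:
  assumes "e \<noteq> []"
  shows "wt x (e @ [i]) = wt x e * (if i < last e then x else 1)"
proof -
  obtain m where m: "length e = Suc m" and last: "last e = e ! m"
    using assms by (cases e rule: rev_cases) auto
  have "wt x (e @ [i]) = (\<Prod>j<m. if is_tail (e @ [i]) j then 1 else x) *
      (if is_tail (e @ [i]) m then 1 else x)"
    unfolding wt_def using m by (simp add: is_tail_def)
  also have "(\<Prod>j<m. if is_tail (e @ [i]) j then 1 else x) = wt x e"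
    unfolding wt_def using m by (auto simp: is_tail_def nth_append intro: prod.cong)
  also have "(if is_tail (e @ [i]) m then 1 else x) = (if i < last e then x else 1)"
    using m last by (simp add: is_tail_def nth_append)
  finally show ?thesis .
qed

lemma ascent_seq_snoc_iff:
  assumes "e \<noteq> []"
  shows "ascent_seq (e @ [i]) \<longleftrightarrow> ascent_seq e \<and> i \<le> asc e + 1"
proof -
  have "asc e < length e"
    using asc_less_length assms by blast
  then show ?thesis
    unfolding ascent_seq_def inversion_seq_def using assms
    by (auto simp: nth_append less_Suc_eq dest: spec[of _ "length e"])
qed

lemma primitive_snoc_iff:
  assumes "e \<noteq> []"
  shows "primitive (e @ [i]) \<longleftrightarrow> primitive e \<and> i \<noteq> last e"
proof -
  obtain m where m: "length e = Suc m" and last: "last e = e ! m"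
    using assms by (cases e rule: rev_cases) auto
  show ?thesis
    unfolding primitive_def using m last
    by (auto simp: nth_append less_Suc_eq dest: spec[of _ m])
qed

lemma avoids_12_0_snoc_iff:
  "avoids_12_0 (e @ [i]) \<longleftrightarrow> avoids_12_0 e \<and> ascent_bottom_max e \<le> i"
proof -
  let ?pat = "\<lambda>e p q. p + 1 < q \<and> q < length e \<and> e ! q < e ! p \<and> e ! p < e ! (p + 1)"
  have "?pat (e @ [i]) p q \<longleftrightarrow>
      ?pat e p q \<or> (q = length e \<and> p + 1 < length e \<and> e ! p < e ! (p + 1) \<and> i < e ! p)" for p q
    by (cases "q < length e") (auto simp: nth_append)
  then have "(\<exists>p q. ?pat (e @ [i]) p q) \<longleftrightarrow>
      (\<exists>p q. ?pat e p q) \<or> (\<exists>p. p + 1 < length e \<and> e ! p < e ! (p + 1) \<and> i < e ! p)"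
    by blast
  then show ?thesis
    unfolding avoids_12_0_def ascent_bottom_max_le_iff by (auto simp: not_le)
qed

lemma asc_singleton [simp]: "asc [a] = 0"
  unfolding asc_def by simp

lemma ascent_bottom_max_singleton [simp]: "ascent_bottom_max [a] = 0"
  unfolding ascent_bottom_max_def by simp

lemma wt_singleton [simp]: "wt x [a] = 1"
  unfolding wt_def is_tail_def by simp

definition PA_12_0_seqs :: "nat list set" where
  "PA_12_0_seqs = {e. e \<noteq> [] \<and> ascent_seq e \<and> primitive e \<and> avoids_12_0 e}"

lemma PA_12_0_eq: "PA_12_0 k i = {e \<in> PA_12_0_seqs. asc e = k \<and> last e = i}"
  unfolding PA_12_0_def PA_12_0_seqs_def by auto

lemma singleton_in_PA_12_0_seqs_iff [simp]: "[a] \<in> PA_12_0_seqs \<longleftrightarrow> a = 0"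
  unfolding PA_12_0_seqs_def ascent_seq_def inversion_seq_def primitive_def avoids_12_0_def
  by auto

lemma snoc_in_PA_12_0_seqs_iff:
  assumes "e \<noteq> []"
  shows "e @ [i] \<in> PA_12_0_seqs \<longleftrightarrow>
    e \<in> PA_12_0_seqs \<and> i \<noteq> last e \<and> i \<le> asc e + 1 \<and> ascent_bottom_max e \<le> i"
  using assms ascent_seq_snoc_iff primitive_snoc_iff avoids_12_0_snoc_iff
  unfolding PA_12_0_seqs_def by auto

lemma PA_12_0_seqs_induct [consumes 1, case_names single snoc]:
  assumes "e \<in> PA_12_0_seqs"
    and "P [0]"
    and "\<And>e i. e \<in> PA_12_0_seqs \<Longrightarrow> P e \<Longrightarrow> i \<noteq> last e \<Longrightarrow> i \<le> asc e + 1 \<Longrightarrow>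
      ascent_bottom_max e \<le> i \<Longrightarrow> P (e @ [i])"
  shows "P e"
  using assms(1)
proof (induction e rule: rev_induct)
  case Nil
  then show ?case
    by (simp add: PA_12_0_seqs_def)
next
  case (snoc i e)
  show ?case
  proof (cases "e = []")
    case True
    with snoc.prems assms(2) show ?thesis
      by simp
  next
    case False
    with snoc show ?thesis
      using assms(3) snoc_in_PA_12_0_seqs_iff by blast
  qed
qed

lemma last_le_asc: "e \<in> PA_12_0_seqs \<Longrightarrow> last e \<le> asc e"
proof (induction rule: PA_12_0_seqs_induct)
  case (snoc e i)
  then show ?case
    by (auto simp: asc_snoc PA_12_0_seqs_def)
qed simp

lemma ascent_bottom_max_le_last: "e \<in> PA_12_0_seqs \<Longrightarrow> ascent_bottom_max e \<le> last e"
proof (induction rule: PA_12_0_seqs_induct)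
  case (snoc e i)
  then show ?case
    by (auto simp: ascent_bottom_max_snoc PA_12_0_seqs_def)
qed simp

lemma PA_12_0_memD: "e \<in> PA_12_0 k i \<Longrightarrow> e \<noteq> [] \<and> last e = i \<and> i \<le> k"
  using last_le_asc by (auto simp: PA_12_0_eq PA_12_0_seqs_def)

lemma length_plus_last_le: "e \<in> PA_12_0_seqs \<Longrightarrow> length e + last e \<le> (asc e + 1)\<^sup>2 + 1"
proof (induction rule: PA_12_0_seqs_induct)
  case (snoc e i)
  then show ?case
    by (auto simp: asc_snoc PA_12_0_seqs_def power2_eq_square)
qed simp

lemma finite_PA_12_0_seqs_asc_le: "finite {e \<in> PA_12_0_seqs. asc e \<le> k}"
proof (rule finite_subset)
  let ?N = "(k + 1)\<^sup>2 + 1"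
  show "{e \<in> PA_12_0_seqs. asc e \<le> k} \<subseteq> {e. set e \<subseteq> {..?N} \<and> length e \<le> ?N}"
  proof (rule subsetI, elim CollectE conjE)
    fix e assume e: "e \<in> PA_12_0_seqs" "asc e \<le> k"
    have "length e \<le> (asc e + 1)\<^sup>2 + 1"
      using length_plus_last_le[OF e(1)] by linarith
    also have "\<dots> \<le> ?N"
      using e(2) by (simp add: power_mono)
    finally have len: "length e \<le> ?N" .
    have "e ! j \<le> ?N" if "j < length e" for j
      using that e(1) len unfolding PA_12_0_seqs_def ascent_seq_def inversion_seq_def by fastforce
    then have "set e \<subseteq> {..?N}"
      by (auto simp: in_set_conv_nth)
    with len show "e \<in> {e. set e \<subseteq> {..?N} \<and> length e \<le> ?N}"
      by simp
  qed
  show "finite {e. set e \<subseteq> {..?N} \<and> length e \<le> ?N}"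
    by (rule finite_lists_length_le) simp
qed

lemma finite_PA_12_0: "finite (PA_12_0 k i)"
  unfolding PA_12_0_eq by (rule finite_subset[OF _ finite_PA_12_0_seqs_asc_le[of k]]) auto

definition PA_12_0_bottom :: "nat \<Rightarrow> nat \<Rightarrow> nat \<Rightarrow> nat list set" where
  "PA_12_0_bottom k i b = {e \<in> PA_12_0 k i. ascent_bottom_max e = b}"

definition f_bottom :: "nat \<Rightarrow> nat \<Rightarrow> nat \<Rightarrow> 'a::comm_ring_1 \<Rightarrow> 'a" where
  "f_bottom k i b x = (\<Sum>e\<in>PA_12_0_bottom k i b. wt x e)"

lemma PA_12_0_bottom_subset: "PA_12_0_bottom k i b \<subseteq> PA_12_0 k i"
  unfolding PA_12_0_bottom_def by blast

lemma finite_PA_12_0_bottom: "finite (PA_12_0_bottom k i b)"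
  using finite_subset[OF PA_12_0_bottom_subset finite_PA_12_0] .

lemma f_eq_sum_f_bottom: "f k i x = (\<Sum>b\<le>i. f_bottom k i b x)"
proof -
  have "ascent_bottom_max ` PA_12_0 k i \<subseteq> {..i}"
    using ascent_bottom_max_le_last unfolding PA_12_0_eq by blast
  then show ?thesis
    unfolding f_def f_bottom_def PA_12_0_bottom_def
    by (rule sum.group[OF finite_PA_12_0 finite_atMost, symmetric])
qed

lemma snoc_in_PA_12_0_bottom_iff:
  assumes "e \<noteq> []"
  shows "e @ [t] \<in> PA_12_0_bottom k t b \<longleftrightarrow>
    (b \<le> t \<and> t < last e \<and> e \<in> PA_12_0_bottom k (last e) b) \<or>
    (0 < k \<and> b < t \<and> t \<le> k \<and> e \<in> PA_12_0 (k - 1) b)"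
proof (cases "e \<in> PA_12_0_seqs")
  case True
  then have "last e \<le> asc e" "ascent_bottom_max e \<le> last e"
    using last_le_asc ascent_bottom_max_le_last by blast+
  with assms True show ?thesis
    unfolding PA_12_0_bottom_def PA_12_0_eq
    by (auto simp: snoc_in_PA_12_0_seqs_iff asc_snoc ascent_bottom_max_snoc)
next
  case False
  with assms show ?thesis
    unfolding PA_12_0_bottom_def PA_12_0_eq by (simp add: snoc_in_PA_12_0_seqs_iff)
qed

lemma PA_12_0_bottom_split_last:
  "PA_12_0_bottom k t b =
    (if k = 0 \<and> t = 0 \<and> b = 0 then {[0]} else {}) \<union>
    (\<lambda>e. e @ [t]) ` {e. e \<noteq> [] \<and> e @ [t] \<in> PA_12_0_bottom k t b}"
proof (intro equalityI subsetI)
  fix e assume e: "e \<in> PA_12_0_bottom k t b"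
  then have "e \<noteq> []" "last e = t"
    by (auto simp: PA_12_0_bottom_def PA_12_0_eq PA_12_0_seqs_def)
  then obtain e' where "e = e' @ [t]"
    by (metis append_butlast_last_id)
  with e show "e \<in> (if k = 0 \<and> t = 0 \<and> b = 0 then {[0]} else {}) \<union>
      (\<lambda>e. e @ [t]) ` {e. e \<noteq> [] \<and> e @ [t] \<in> PA_12_0_bottom k t b}"
    by (cases "e' = []") (auto simp: PA_12_0_bottom_def PA_12_0_eq)
qed (auto simp: PA_12_0_bottom_def PA_12_0_eq split: if_splits)

lemma snoc_preimage_PA_12_0_bottom:
  "{e. e \<noteq> [] \<and> e @ [t] \<in> PA_12_0_bottom k t b} =
    (if b \<le> t then \<Union>j\<in>{t<..k}. PA_12_0_bottom k j b else {}) \<union>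
    (if 0 < k \<and> b < t \<and> t \<le> k then PA_12_0 (k - 1) b else {})"
  (is "_ = ?rhs")
proof -
  have memD: "e \<noteq> [] \<and> last e = i \<and> i \<le> k'" if "e \<in> PA_12_0_bottom k' i b" for e k' i
    using that PA_12_0_bottom_subset PA_12_0_memD by blast
  have "e \<in> ?rhs \<longleftrightarrow> e \<noteq> [] \<and> e @ [t] \<in> PA_12_0_bottom k t b" for e
  proof (cases "e = []")
    case True
    then show ?thesis
      using memD by (auto simp: PA_12_0_eq PA_12_0_seqs_def)
  next
    case False
    have "(\<exists>j\<in>{t<..k}. e \<in> PA_12_0_bottom k j b) \<longleftrightarrow>
        t < last e \<and> e \<in> PA_12_0_bottom k (last e) b"
      using memD[of e k "last e"] by (auto dest: memD)
    then show ?thesis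
      unfolding snoc_in_PA_12_0_bottom_iff[OF False] using False by auto
  qed
  then show ?thesis
    by blast
qed

lemma sum_wt_snoc:
  assumes "\<And>e. e \<in> A \<Longrightarrow> e \<noteq> []"
  shows "sum (wt x) ((\<lambda>e. e @ [t]) ` A) = (\<Sum>e\<in>A. wt x e * (if t < last e then x else 1))"
  using assms by (simp add: sum.reindex inj_on_def wt_snoc cong: sum.cong)

lemma f_bottom_split_last:
  "f_bottom k t b x = of_bool (k = 0 \<and> t = 0 \<and> b = 0) +
    (\<Sum>e | e \<noteq> [] \<and> e @ [t] \<in> PA_12_0_bottom k t b. wt x e * (if t < last e then x else 1))"
proof -
  define P where "P = {e. e \<noteq> [] \<and> e @ [t] \<in> PA_12_0_bottom k t b}"
  define snocs where "snocs = (\<lambda>e. e @ [t]) ` P"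
  have "snocs \<subseteq> PA_12_0_bottom k t b"
    by (auto simp: snocs_def P_def)
  then have "finite snocs"
    using finite_PA_12_0_bottom finite_subset by blast
  moreover have "[0] \<notin> snocs"
    by (auto simp: snocs_def P_def)
  moreover have "sum (wt x) snocs = (\<Sum>e\<in>P. wt x e * (if t < last e then x else 1))"
    unfolding snocs_def by (rule sum_wt_snoc) (simp add: P_def)
  moreover have "PA_12_0_bottom k t b = (if k = 0 \<and> t = 0 \<and> b = 0 then {[0]} else {}) \<union> snocs"
    unfolding snocs_def P_def by (rule PA_12_0_bottom_split_last)
  ultimately show ?thesis
    unfolding f_bottom_def P_def[symmetric] by simp
qed

lemma f_bottom_rec:
  "f_bottom k t b x =
    of_bool (k = 0 \<and> t = 0 \<and> b = 0) +
    of_bool (b \<le> t) * x * (\<Sum>j\<in>{t<..k}. f_bottom k j b x) +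
    of_bool (0 < k \<and> b < t \<and> t \<le> k) * f (k - 1) b x"
proof -
  define descents where "descents = (if b \<le> t then \<Union>j\<in>{t<..k}. PA_12_0_bottom k j b else {})"
  define ascents where "ascents = (if 0 < k \<and> b < t \<and> t \<le> k then PA_12_0 (k - 1) b else {})"
  let ?wt_snoc = "\<lambda>e. wt x e * (if t < last e then x else 1)"
  have descents_D: "t < last e" if "e \<in> descents" for e
    using that PA_12_0_bottom_subset PA_12_0_memD by (fastforce simp: descents_def split: if_splits)
  have ascents_D: "last e < t" if "e \<in> ascents" for e
    using that PA_12_0_memD by (auto simp: ascents_def split: if_splits)
  have "finite descents" "finite ascents"
    by (auto simp: descents_def ascents_def finite_PA_12_0_bottom finite_PA_12_0)
  with descents_D ascents_D have "(\<Sum>e\<in>descents \<union> ascents. ?wt_snoc e) =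
      (\<Sum>e\<in>descents. ?wt_snoc e) + (\<Sum>e\<in>ascents. ?wt_snoc e)"
    by (intro sum.union_disjoint) fastforce+
  also have "(\<Sum>e\<in>descents. ?wt_snoc e) = x * sum (wt x) descents"
    using descents_D by (simp add: sum_distrib_left mult.commute cong: sum.cong)
  also have "sum (wt x) descents = of_bool (b \<le> t) * (\<Sum>j\<in>{t<..k}. f_bottom k j b x)"
    unfolding descents_def f_bottom_def
    by (simp, intro impI sum.UNION_disjoint finite_PA_12_0_bottom ballI)
      (auto simp: PA_12_0_bottom_def PA_12_0_eq)
  also have "(\<Sum>e\<in>ascents. ?wt_snoc e) = sum (wt x) ascents"
    by (rule sum.cong) (auto dest: ascents_D)
  also have "\<dots> = of_bool (0 < k \<and> b < t \<and> t \<le> k) * f (k - 1) b x"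
    by (simp add: ascents_def f_def)
  finally show ?thesis
    unfolding f_bottom_split_last[of k t b] snoc_preimage_PA_12_0_bottom
      descents_def[symmetric] ascents_def[symmetric]
    by (simp add: mult_ac)
qed

definition f_closed :: "nat \<Rightarrow> nat \<Rightarrow> 'a::comm_ring_1 \<Rightarrow> 'a" where
  "f_closed k i x = (1 + x) ^ (i choose 2) * (\<Prod>l\<in>{i+1..k}. (1 + x) ^ l - 1)"

lemma f_closed_diag [simp]: "f_closed k k x = (1 + x) ^ (k choose 2)"
  unfolding f_closed_def by simp

lemma f_closed_Suc: "i \<le> k \<Longrightarrow> f_closed (Suc k) i x = ((1 + x) ^ Suc k - 1) * f_closed k i x"
  unfolding f_closed_def by (simp add: prod.nat_ivl_Suc' algebra_simps)

lemma choose_two_Suc: "Suc i choose 2 = (i choose 2) + i"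
  by (simp add: numeral_2_eq_2)

lemma f_closed_Suc_index:
  assumes "Suc i \<le> k"
  shows "(1 + x) ^ i * f_closed k i x = ((1 + x) ^ Suc i - 1) * f_closed k (Suc i) x"
proof -
  have "{i+1..k} = insert (Suc i) {Suc i + 1..k}"
    using assms by auto
  then show ?thesis
    unfolding f_closed_def by (simp add: choose_two_Suc power_add algebra_simps)
qed

lemma sum_f_closed: "i \<le> k \<Longrightarrow> (\<Sum>b\<le>i. f_closed k b x) = (1 + x) ^ i * f_closed k i x"
proof (induction i)
  case (Suc i)
  then have "(\<Sum>b\<le>Suc i. f_closed k b x) = (1 + x) ^ i * f_closed k i x + f_closed k (Suc i) x"
    by simp
  also have "\<dots> = (1 + x) ^ Suc i * f_closed k (Suc i) x"
    using f_closed_Suc_index[OF Suc.prems, of x] by (simp add: algebra_simps)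
  finally show ?case .
qed simp

lemma geometric_sum_descending:
  fixes x :: "'a::comm_ring_1"
  assumes "t \<le> k"
  shows "x * (\<Sum>j\<in>{t<..k}. (1 + x) ^ (k - j)) = (1 + x) ^ (k - t) - 1"
  using assms
proof (induction k)
  case (Suc k)
  show ?case
  proof (cases "t = Suc k")
    case False
    with Suc have "t \<le> k"
      by simp
    have "{t<..Suc k} = insert (Suc k) {t<..k}"
      using \<open>t \<le> k\<close> by auto
    then have "(\<Sum>j\<in>{t<..Suc k}. (1 + x) ^ (Suc k - j)) =
        1 + (1 + x) * (\<Sum>j\<in>{t<..k}. (1 + x) ^ (k - j))"
      by (simp add: sum_distrib_left) (rule sum.cong, auto simp: Suc_diff_le)
    then have "x * (\<Sum>j\<in>{t<..Suc k}. (1 + x) ^ (Suc k - j)) =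
        x + (1 + x) * (x * (\<Sum>j\<in>{t<..k}. (1 + x) ^ (k - j)))"
      by (simp add: algebra_simps)
    also have "\<dots> = x + (1 + x) * ((1 + x) ^ (k - t) - 1)"
      using Suc.IH[OF \<open>t \<le> k\<close>] by simp
    also have "\<dots> = (1 + x) ^ (Suc k - t) - 1"
      using \<open>t \<le> k\<close> by (simp add: Suc_diff_le algebra_simps)
    finally show ?thesis .
  qed simp
qed simp

lemma f_bottom_closed:
  fixes x :: "'a::comm_ring_1"
  assumes f_prev: "f (k - 1) b x = f_closed (k - 1) b x"
    and "0 < k" "b < k" "b \<le> t" "t \<le> k"
  shows "f_bottom k t b x = f_closed (k - 1) b x * ((1 + x) ^ (k - t) - of_bool (t = b))"
  using assms(4,5)
proof (induction "k - t" arbitrary: t rule: less_induct)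
  case less
  let ?F = "f_closed (k - 1) b x"
  have "(\<Sum>j\<in>{t<..k}. f_bottom k j b x) = ?F * (\<Sum>j\<in>{t<..k}. (1 + x) ^ (k - j))"
    unfolding sum_distrib_left using less by (intro sum.cong) (auto intro!: less.hyps[THEN trans])
  then have "x * (\<Sum>j\<in>{t<..k}. f_bottom k j b x) = ?F * ((1 + x) ^ (k - t) - 1)"
    using geometric_sum_descending[OF \<open>t \<le> k\<close>, of x] by (metis mult.left_commute)
  then show ?case
    using f_bottom_rec[of k t b x] f_prev less.prems \<open>0 < k\<close>
    by (cases "t = b") (simp_all add: algebra_simps)
qed

lemma f_Suc_eq_f_closed:
  fixes x :: "'a::comm_ring_1"
  assumes f_prev: "\<And>b. b \<le> m \<Longrightarrow> f m b x = f_closed m b x"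
    and "i \<le> Suc m"
  shows "f (Suc m) i x = f_closed (Suc m) i x"
proof -
  let ?y = "1 + x"
  have f_bottom_Suc: "f_bottom (Suc m) t b x = f_closed m b x * (?y ^ (Suc m - t) - of_bool (t = b))"
    if "b \<le> t" "t \<le> Suc m" "b \<le> m" for t b
    using f_bottom_closed[of "Suc m" b x t] f_prev that by simp
  show ?thesis
  proof (cases "i = Suc m")
    case True
    have "f_bottom (Suc m) (Suc m) (Suc m) x = 0"
      using f_bottom_rec[of "Suc m" "Suc m" "Suc m" x] by simp
    moreover have "(\<Sum>b\<le>m. f_bottom (Suc m) (Suc m) b x) = (\<Sum>b\<le>m. f_closed m b x)"
      by (rule sum.cong) (simp_all add: f_bottom_Suc)
    ultimately have "f (Suc m) i x = (\<Sum>b\<le>m. f_closed m b x)"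
      using True by (simp add: f_eq_sum_f_bottom)
    also have "\<dots> = ?y ^ (Suc m choose 2)"
      by (simp add: sum_f_closed choose_two_Suc power_add mult.commute)
    finally show ?thesis
      using True by simp
  next
    case False
    with \<open>i \<le> Suc m\<close> have "i \<le> m"
      by simp
    have "f (Suc m) i x =
        (\<Sum>b\<le>i. ?y ^ (Suc m - i) * f_closed m b x - of_bool (i = b) * f_closed m b x)"
      unfolding f_eq_sum_f_bottom
      by (rule sum.cong) (use \<open>i \<le> m\<close> in \<open>simp_all add: f_bottom_Suc algebra_simps\<close>)
    also have "\<dots> = ?y ^ (Suc m - i) * (\<Sum>b\<le>i. f_closed m b x) - f_closed m i x"
      by (simp add: sum_subtractf sum_distrib_left)
    also have "\<dots> = (?y ^ Suc m - 1) * f_closed m i x"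
      using \<open>i \<le> m\<close> by (simp add: sum_f_closed mult.assoc power_add[symmetric] algebra_simps)
    finally show ?thesis
      using f_closed_Suc[OF \<open>i \<le> m\<close>, of x] by simp
  qed
qed

lemma f_eq_f_closed: "i \<le> k \<Longrightarrow> f k i x = f_closed k i x"
proof (induction k arbitrary: i)
  case 0
  then show ?case
    using f_bottom_rec[of 0 0 0 x] by (simp add: f_eq_sum_f_bottom binomial_eq_0)
next
  case (Suc m)
  then show ?case
    using f_Suc_eq_f_closed by blast
qed

theorem theorem2p3:
  fixes x :: "'a::comm_ring_1" and k i :: nat
  assumes "i \<le> k"
  shows "f k i x = (1 + x) ^ (i choose 2) * (\<Prod>l\<in>{i+1..k}. (1 + x) ^ l - 1)"
  using f_eq_f_closed[OF assms] by (simp add: f_closed_def)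

end
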